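(* Let $\nu\ge1$, $\Psi\neq\emptyset$, $n\in\mathbb N$, and let $W_1,\dots,W_n:\Omega\to\ell^\infty(\Psi)$ be arbitrary (not necessarily measurable) maps on a probability space $(\Omega,\Upsilon,P)$. For $1\le i\le j\le n$ and $\psi\in\Psi$ let $S^W_{i,j}(\psi)=\sum_{k=i}^jW_k(\psi)$ and $M^W_{i,j}(\psi)=\max_{k=i,\dots,j}|S^W_{i,k}(\psi)|$. Suppose there exist $\alpha>1$ and $g:\{1,\dots,n\}^2\to\mathbb R$ such that $\mathrm E^*\{\sup_{\psi\in\Psi}|S^W_{i,j}(\psi)|^\nu\}\le g^\alpha(i,j)$ for all $1\le i\le j\le n$, and (i') $g(i,j)\ge0$ for all $(i,j)\in\{1,\dots,n\}^2$; (ii') $g(i,j)\le g(i,j+1)$ for all $1\le i\le j\le n-1$; (iii') $g(i,j)+g(j+1,k)\le Q\,g(i,k)$ for all $1\le i\le j<k\le n$, for some $Q\in[1,2^{(\alpha-1)/\alpha})$. Then there exists a constant $A$ depending only on $\alpha,\nu,Q$ such that $$\mathrm E^*\Big\{\sup_{\psi\in\Psi}|M^W_{1,n}(\psi)|^\nu\Big\}\le A\,g^\alpha(1,n);$$ one may take $A=\big(1-Q^{\alpha/\nu}/2^{(\alpha-1)/\nu}\big)^{-\nu}$.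
   Context: $\ell^\infty(\Psi)$ is the space of bounded real functions on $\Psi$. $\mathrm E^*$ denotes outer expectation: $\mathrm E^*\{Y\}=\inf\{\mathrm E\{U\}:U\ge Y,\ U:\Omega\to[-\infty,\infty]\text{ measurable},\ \mathrm E\{U\}\text{ exists}\}$. *)

theory Defs
  imports "HOL-Probability.Probability"
begin

definition ereal_expectation_exists :: "'a measure \<Rightarrow> ('a \<Rightarrow> ereal) \<Rightarrow> bool" where
  "ereal_expectation_exists M U \<longleftrightarrow>
     \<not> ((\<integral>\<^sup>+ x. e2ennreal (U x) \<partial>M) = \<infinity> \<and> (\<integral>\<^sup>+ x. e2ennreal (- U x) \<partial>M) = \<infinity>)"

definition ereal_expectation :: "'a measure \<Rightarrow> ('a \<Rightarrow> ereal) \<Rightarrow> ereal" where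
  "ereal_expectation M U =
     enn2ereal (\<integral>\<^sup>+ x. e2ennreal (U x) \<partial>M) - enn2ereal (\<integral>\<^sup>+ x. e2ennreal (- U x) \<partial>M)"

definition outer_expectation :: "'a measure \<Rightarrow> ('a \<Rightarrow> ereal) \<Rightarrow> ereal" where
  "outer_expectation M Y =
     Inf {ereal_expectation M U | U. U \<in> borel_measurable M \<and>
            (\<forall>\<omega>\<in>space M. Y \<omega> \<le> U \<omega>) \<and> ereal_expectation_exists M U}"

definition partial_sum :: "(nat \<Rightarrow> 'a \<Rightarrow> 'p \<Rightarrow> real) \<Rightarrow> nat \<Rightarrow> nat \<Rightarrow> 'a \<Rightarrow> 'p \<Rightarrow> real" where
  "partial_sum W i j \<omega> \<psi> = (\<Sum>k = i..j. W k \<omega> \<psi>)"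

definition max_partial_sum :: "(nat \<Rightarrow> 'a \<Rightarrow> 'p \<Rightarrow> real) \<Rightarrow> nat \<Rightarrow> nat \<Rightarrow> 'a \<Rightarrow> 'p \<Rightarrow> real" where
  "max_partial_sum W i j \<omega> \<psi> = Max ((\<lambda>k. \<bar>partial_sum W i k \<omega> \<psi>\<bar>) ` {i..j})"

end

theory Submission
  imports Defs
begin

(* Superadditivity (iii') lets one split {i..j} at a point m with
   g(i,m-1) and g(m+1,j) both at most Q g(i,j)/2.  Pointwise
     M_{i,j} <= |S_{i,m}| + max (M_{i,m-1}) (M_{m+1,j}),
   and convexity of x^nu with weights 1 - r and r turns this into
     M_{i,j}^nu <= (1-r)^(1-nu) |S_{i,m}|^nu + r^(1-nu) (M_{i,m-1}^nu + M_{m+1,j}^nu).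
   Outer expectation is monotone and sublinear, so by the induction hypothesis the two blocks
   contribute at most 2 A (Q g(i,j)/2)^alpha = A r^nu g(i,j)^alpha, where r^nu = Q^alpha / 2^(alpha-1);
   the constant A = (1-r)^(-nu) is the fixed point of A = (1-r)^(1-nu) + r^(1-nu) r^nu A.
   The hypothesis Q < 2^((alpha-1)/alpha) says exactly r < 1. *)

definition sup_norm_powr :: "'p set \<Rightarrow> real \<Rightarrow> ('a \<Rightarrow> 'p \<Rightarrow> real) \<Rightarrow> 'a \<Rightarrow> ereal" where
  "sup_norm_powr \<Psi> \<nu> X \<omega> = (SUP \<psi>\<in>\<Psi>. ereal (\<bar>X \<omega> \<psi>\<bar> powr \<nu>))"

lemma sup_norm_powr_nonneg: "\<Psi> \<noteq> {} \<Longrightarrow> 0 \<le> sup_norm_powr \<Psi> \<nu> X \<omega>"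
  unfolding sup_norm_powr_def by (auto intro: SUP_upper2)

lemma ereal_expectation_nonneg:
  assumes "\<And>\<omega>. \<omega> \<in> space M \<Longrightarrow> 0 \<le> U \<omega>"
  shows "ereal_expectation M U = enn2ereal (\<integral>\<^sup>+ x. e2ennreal (U x) \<partial>M)"
    and "ereal_expectation_exists M U"
proof -
  have "(\<integral>\<^sup>+ x. e2ennreal (- U x) \<partial>M) = (\<integral>\<^sup>+ x. 0 \<partial>M)"
    by (rule nn_integral_cong) (use assms in \<open>auto intro!: e2ennreal_neg\<close>)
  then have neg_part: "(\<integral>\<^sup>+ x. e2ennreal (- U x) \<partial>M) = 0" by simp
  show "ereal_expectation M U = enn2ereal (\<integral>\<^sup>+ x. e2ennreal (U x) \<partial>M)"
    unfolding ereal_expectation_def neg_part by (simp add: zero_ennreal.rep_eq)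
  show "ereal_expectation_exists M U"
    unfolding ereal_expectation_exists_def neg_part by simp
qed

lemma outer_expectation_le_nn_integral:
  assumes "V \<in> borel_measurable M" and "\<And>\<omega>. \<omega> \<in> space M \<Longrightarrow> Y \<omega> \<le> enn2ereal (V \<omega>)"
  shows "outer_expectation M Y \<le> enn2ereal (\<integral>\<^sup>+ x. V x \<partial>M)"
proof -
  let ?U = "\<lambda>\<omega>. enn2ereal (V \<omega>)"
  have "ereal_expectation M ?U = enn2ereal (\<integral>\<^sup>+ x. V x \<partial>M)" "ereal_expectation_exists M ?U"
    using ereal_expectation_nonneg[of M ?U] by (simp_all add: e2ennreal_enn2ereal)
  moreover have "?U \<in> borel_measurable M" using assms(1) by measurable
  ultimately show ?thesis
    unfolding outer_expectation_def using assms(2)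
    by (intro Inf_lower CollectI exI[where x = "\<lambda>\<omega>. enn2ereal (V \<omega>)"]) auto
qed

lemma outer_expectation_zero_le: "outer_expectation M (\<lambda>_. 0) \<le> 0"
  using outer_expectation_le_nn_integral[of "\<lambda>_. 0" M "\<lambda>_. 0"] by (simp add: zero_ennreal.rep_eq)

lemma outer_expectation_lessE:
  assumes "outer_expectation M Y < ereal b" and "\<And>\<omega>. \<omega> \<in> space M \<Longrightarrow> 0 \<le> Y \<omega>" and "0 \<le> b"
  obtains V where "V \<in> borel_measurable M" "\<And>\<omega>. \<omega> \<in> space M \<Longrightarrow> Y \<omega> \<le> enn2ereal (V \<omega>)"
    "(\<integral>\<^sup>+ x. V x \<partial>M) < ennreal b"
proof -
  from assms(1) obtain U where U: "U \<in> borel_measurable M" "\<forall>\<omega>\<in>space M. Y \<omega> \<le> U \<omega>"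
    "ereal_expectation M U < ereal b"
    unfolding outer_expectation_def Inf_less_iff by blast
  have U_nonneg: "0 \<le> U \<omega>" if "\<omega> \<in> space M" for \<omega>
    using assms(2) U(2) that order_trans by blast
  have "enn2ereal (\<integral>\<^sup>+ x. e2ennreal (U x) \<partial>M) < enn2ereal (ennreal b)"
    using U(3) ereal_expectation_nonneg(1)[of M U, OF U_nonneg] assms(3) by simp
  then have "(\<integral>\<^sup>+ x. e2ennreal (U x) \<partial>M) < ennreal b"
    by (simp add: less_ennreal.rep_eq)
  moreover have "Y \<omega> \<le> enn2ereal (e2ennreal (U \<omega>))" if "\<omega> \<in> space M" for \<omega>
    using U(2) U_nonneg that by (simp add: enn2ereal_e2ennreal)
  moreover have "(\<lambda>x. e2ennreal (U x)) \<in> borel_measurable M" using U(1) by measurable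
  ultimately show ?thesis using that by blast
qed

lemma outer_expectation_le_lincomb:
  fixes a b x z :: real
  assumes "0 \<le> a" "0 \<le> b" "0 \<le> x" "0 \<le> z"
    and X_nonneg: "\<And>\<omega>. \<omega> \<in> space M \<Longrightarrow> 0 \<le> X \<omega>"
    and Z_nonneg: "\<And>\<omega>. \<omega> \<in> space M \<Longrightarrow> 0 \<le> Z \<omega>"
    and Y_le: "\<And>\<omega>. \<omega> \<in> space M \<Longrightarrow> Y \<omega> \<le> ereal a * X \<omega> + ereal b * Z \<omega>"
    and X: "outer_expectation M X \<le> ereal x" and Z: "outer_expectation M Z \<le> ereal z"
  shows "outer_expectation M Y \<le> ereal (a * x + b * z)"
proof (rule ereal_le_epsilon2)
  fix e :: real assume "0 < e"
  define d where "d = e / (a + b + 1)"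
  have d: "0 < d" "(a + b) * d \<le> e"
    using \<open>0 < e\<close> assms(1,2) by (auto simp: d_def field_simps)
  obtain V1 where V1: "V1 \<in> borel_measurable M" "\<And>\<omega>. \<omega> \<in> space M \<Longrightarrow> X \<omega> \<le> enn2ereal (V1 \<omega>)"
    "(\<integral>\<^sup>+ x. V1 x \<partial>M) < ennreal (x + d)"
    by (rule outer_expectation_lessE[of M X "x + d", OF _ X_nonneg])
      (use X d assms(3) in \<open>auto intro: order.strict_trans1\<close>)
  obtain V2 where V2: "V2 \<in> borel_measurable M" "\<And>\<omega>. \<omega> \<in> space M \<Longrightarrow> Z \<omega> \<le> enn2ereal (V2 \<omega>)"
    "(\<integral>\<^sup>+ x. V2 x \<partial>M) < ennreal (z + d)"
    by (rule outer_expectation_lessE[of M Z "z + d", OF _ Z_nonneg])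
      (use Z d assms(4) in \<open>auto intro: order.strict_trans1\<close>)
  define V where "V = (\<lambda>\<omega>. ennreal a * V1 \<omega> + ennreal b * V2 \<omega>)"
  have "Y \<omega> \<le> enn2ereal (V \<omega>)" if "\<omega> \<in> space M" for \<omega>
  proof -
    have "Y \<omega> \<le> ereal a * X \<omega> + ereal b * Z \<omega>" using Y_le that .
    also have "\<dots> \<le> ereal a * enn2ereal (V1 \<omega>) + ereal b * enn2ereal (V2 \<omega>)"
      using V1(2) V2(2) that assms(1,2) by (intro add_mono ereal_mult_left_mono) auto
    also have "\<dots> = enn2ereal (V \<omega>)"
      unfolding V_def using assms(1,2) by (simp add: plus_ennreal.rep_eq times_ennreal.rep_eq)
    finally show ?thesis .
  qed
  then have "outer_expectation M Y \<le> enn2ereal (\<integral>\<^sup>+ x. V x \<partial>M)"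
  proof (rule outer_expectation_le_nn_integral[rotated])
    show "V \<in> borel_measurable M" unfolding V_def using V1(1) V2(1) by measurable
  qed
  also have "(\<integral>\<^sup>+ x. V x \<partial>M) = ennreal a * (\<integral>\<^sup>+ x. V1 x \<partial>M) + ennreal b * (\<integral>\<^sup>+ x. V2 x \<partial>M)"
    unfolding V_def using V1(1) V2(1) by (simp add: nn_integral_add nn_integral_cmult)
  also have "\<dots> \<le> ennreal a * ennreal (x + d) + ennreal b * ennreal (z + d)"
    using V1(3) V2(3) by (intro add_mono mult_left_mono) auto
  also have "\<dots> = ennreal (a * x + b * z + (a + b) * d)"
    using assms d by (simp add: ennreal_mult[symmetric] ennreal_plus[symmetric] algebra_simps del: ennreal_plus)
  finally have "outer_expectation M Y \<le> ereal (a * x + b * z + (a + b) * d)"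
    using assms d by (simp add: less_eq_ennreal.rep_eq del: ennreal_plus)
  also have "\<dots> \<le> ereal (a * x + b * z) + ereal e"
    using d by simp
  finally show "outer_expectation M Y \<le> ereal (a * x + b * z) + ereal e" .
qed

lemma powr_add_le_weighted:
  fixes s t l \<nu> :: real
  assumes "0 \<le> s" "0 \<le> t" "0 < l" "l < 1" "1 \<le> \<nu>"
  shows "(s + t) powr \<nu> \<le> l powr (1 - \<nu>) * s powr \<nu> + (1 - l) powr (1 - \<nu>) * t powr \<nu>"
proof -
  have one_le: "1 \<le> x powr (1 - \<nu>)" if "0 < x" "x \<le> 1" for x :: real
    using that assms(5) by (metis le_iff_diff_le_0 powr_mono2' powr_one_eq_one)
  consider "s = 0" | "t = 0" | "0 < s" "0 < t" using assms(1,2) by linarith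
  then show ?thesis
  proof cases
    case 1
    then show ?thesis using one_le[of "1 - l"] assms by (simp add: mult_le_cancel_right1)
  next
    case 2
    then show ?thesis using one_le[of l] assms by (simp add: mult_le_cancel_right1)
  next
    case 3
    have "((1 - (1 - l)) *\<^sub>R (s / l) + (1 - l) *\<^sub>R (t / (1 - l))) powr \<nu>
      \<le> (1 - (1 - l)) * (s / l) powr \<nu> + (1 - l) * (t / (1 - l)) powr \<nu>"
      by (rule convex_onD[OF powr_convex[OF assms(5)]]) (use assms 3 in auto)
    then show ?thesis using assms 3 by (simp add: powr_divide powr_diff)
  qed
qed

lemma partial_sum_split:
  assumes "i \<le> m" "m \<le> k"
  shows "partial_sum W i k \<omega> \<psi> = partial_sum W i m \<omega> \<psi> + partial_sum W (m + 1) k \<omega> \<psi>"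
  unfolding partial_sum_def using sum.ub_add_nat[of i m _ "k - m"] assms by simp

lemma abs_partial_sum_le_max_partial_sum:
  "i \<le> k \<Longrightarrow> k \<le> j \<Longrightarrow> \<bar>partial_sum W i k \<omega> \<psi>\<bar> \<le> max_partial_sum W i j \<omega> \<psi>"
  unfolding max_partial_sum_def by (rule Max_ge) auto

lemma abs_max_partial_sum [simp]:
  "i \<le> j \<Longrightarrow> \<bar>max_partial_sum W i j \<omega> \<psi>\<bar> = max_partial_sum W i j \<omega> \<psi>"
  using abs_partial_sum_le_max_partial_sum[of i i j W \<omega> \<psi>] by simp

lemma max_partial_sum_nonneg: "i \<le> j \<Longrightarrow> 0 \<le> max_partial_sum W i j \<omega> \<psi>"
  by (metis abs_ge_zero abs_max_partial_sum)

lemma max_partial_sum_le_split: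
  assumes "i \<le> m" "m \<le> j"
  shows "max_partial_sum W i j \<omega> \<psi> \<le> \<bar>partial_sum W i m \<omega> \<psi>\<bar> +
    max (if m = i then 0 else max_partial_sum W i (m - 1) \<omega> \<psi>)
        (if m = j then 0 else max_partial_sum W (m + 1) j \<omega> \<psi>)"
    (is "_ \<le> ?s + max ?P1 ?P2")
  unfolding max_partial_sum_def [of W i j]
proof (rule Max.boundedI)
  show "(\<lambda>k. \<bar>partial_sum W i k \<omega> \<psi>\<bar>) ` {i..j} \<noteq> {}" using assms by simp
  have "0 \<le> ?s" "0 \<le> ?P1" "0 \<le> ?P2" using assms by (simp_all add: max_partial_sum_nonneg)
  fix y assume "y \<in> (\<lambda>k. \<bar>partial_sum W i k \<omega> \<psi>\<bar>) ` {i..j}"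
  then obtain k where k: "i \<le> k" "k \<le> j" and y: "y = \<bar>partial_sum W i k \<omega> \<psi>\<bar>" by auto
  consider "k < m" | "k = m" | "m < k" by linarith
  then show "y \<le> ?s + max ?P1 ?P2"
  proof cases
    case 1
    then have "\<bar>partial_sum W i k \<omega> \<psi>\<bar> \<le> ?P1"
      using k abs_partial_sum_le_max_partial_sum[of i k "m - 1" W] by auto
    then show ?thesis using y \<open>0 \<le> ?s\<close> by linarith
  next
    case 2
    then show ?thesis using y \<open>0 \<le> ?P1\<close> by (simp add: max_def)
  next
    case 3
    then have "\<bar>partial_sum W (m + 1) k \<omega> \<psi>\<bar> \<le> ?P2"
      using k abs_partial_sum_le_max_partial_sum[of "m + 1" k j W] by auto
    then show ?thesis using y partial_sum_split[of i m k W \<omega> \<psi>] 3 assms by linarith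
  qed
qed simp

lemma max_partial_sum_powr_le_split:
  assumes "i \<le> m" "m \<le> j" "0 < r" "r < 1" "1 \<le> \<nu>"
  shows "\<bar>max_partial_sum W i j \<omega> \<psi>\<bar> powr \<nu> \<le>
    (1 - r) powr (1 - \<nu>) * \<bar>partial_sum W i m \<omega> \<psi>\<bar> powr \<nu> +
    r powr (1 - \<nu>) * ((if m = i then 0 else \<bar>max_partial_sum W i (m - 1) \<omega> \<psi>\<bar> powr \<nu>) +
                       (if m = j then 0 else \<bar>max_partial_sum W (m + 1) j \<omega> \<psi>\<bar> powr \<nu>))"
proof -
  define s where "s = \<bar>partial_sum W i m \<omega> \<psi>\<bar>"
  define P1 where "P1 = (if m = i then 0 else max_partial_sum W i (m - 1) \<omega> \<psi>)"
  define P2 where "P2 = (if m = j then 0 else max_partial_sum W (m + 1) j \<omega> \<psi>)"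
  have "0 \<le> P1" "0 \<le> P2"
    using assms unfolding P1_def P2_def by (simp_all add: max_partial_sum_nonneg)
  have "\<bar>max_partial_sum W i j \<omega> \<psi>\<bar> powr \<nu> \<le> (s + max P1 P2) powr \<nu>"
    using max_partial_sum_le_split[OF assms(1,2)] max_partial_sum_nonneg[of i j] assms
    unfolding s_def P1_def P2_def by (intro powr_mono2) auto
  also have "\<dots> \<le> (1 - r) powr (1 - \<nu>) * s powr \<nu> + r powr (1 - \<nu>) * (max P1 P2) powr \<nu>"
    using powr_add_le_weighted[of s "max P1 P2" "1 - r" \<nu>] \<open>0 \<le> P1\<close> assms
    unfolding s_def by auto
  also have "(max P1 P2) powr \<nu> \<le> P1 powr \<nu> + P2 powr \<nu>"
    by (simp add: max_def)
  finally show ?thesis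
    using assms unfolding s_def P1_def P2_def by (auto simp: mult_left_mono)
qed

lemma outer_expectation_max_partial_sum_split:
  fixes W :: "nat \<Rightarrow> 'a \<Rightarrow> 'p \<Rightarrow> real" and \<Psi> :: "'p set"
  assumes \<Psi>: "\<Psi> \<noteq> {}" and m: "i \<le> m" "m \<le> j" and r: "0 < r" "r < 1" and \<nu>: "1 \<le> \<nu>"
    and x: "0 \<le> x" and y: "0 \<le> y"
    and sum_bound: "outer_expectation M (sup_norm_powr \<Psi> \<nu> (partial_sum W i m)) \<le> ereal x"
    and left_bound: "m \<noteq> i \<Longrightarrow>
      outer_expectation M (sup_norm_powr \<Psi> \<nu> (max_partial_sum W i (m - 1))) \<le> ereal y"
    and right_bound: "m \<noteq> j \<Longrightarrow>
      outer_expectation M (sup_norm_powr \<Psi> \<nu> (max_partial_sum W (m + 1) j)) \<le> ereal y"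
  shows "outer_expectation M (sup_norm_powr \<Psi> \<nu> (max_partial_sum W i j))
    \<le> ereal ((1 - r) powr (1 - \<nu>) * x + r powr (1 - \<nu>) * (y + y))"
proof -
  define L where "L = (if m = i then (\<lambda>_. 0) else sup_norm_powr \<Psi> \<nu> (max_partial_sum W i (m - 1)))"
  define R where "R = (if m = j then (\<lambda>_. 0) else sup_norm_powr \<Psi> \<nu> (max_partial_sum W (m + 1) j))"
  have nonneg: "0 \<le> L \<omega>" "0 \<le> R \<omega>" "0 \<le> sup_norm_powr \<Psi> \<nu> X \<omega>" for \<omega> and X :: "'a \<Rightarrow> 'p \<Rightarrow> real"
    unfolding L_def R_def using sup_norm_powr_nonneg[OF \<Psi>] by auto
  have "outer_expectation M L \<le> ereal y" "outer_expectation M R \<le> ereal y"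
    unfolding L_def R_def using left_bound right_bound outer_expectation_zero_le[of M] y
    by (auto intro: order_trans)
  then have LR_bound: "outer_expectation M (\<lambda>\<omega>. L \<omega> + R \<omega>) \<le> ereal (y + y)"
    using outer_expectation_le_lincomb[of 1 1 y y M L R] y nonneg by simp
  have "sup_norm_powr \<Psi> \<nu> (max_partial_sum W i j) \<omega> \<le>
      ereal ((1 - r) powr (1 - \<nu>)) * sup_norm_powr \<Psi> \<nu> (partial_sum W i m) \<omega> +
      ereal (r powr (1 - \<nu>)) * (L \<omega> + R \<omega>)" for \<omega>
    unfolding sup_norm_powr_def [of \<Psi> \<nu> "max_partial_sum W i j"]
  proof (rule SUP_least)
    fix \<psi> assume "\<psi> \<in> \<Psi>"
    define p1 where "p1 = (if m = i then 0 else \<bar>max_partial_sum W i (m - 1) \<omega> \<psi>\<bar> powr \<nu>)"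
    define p2 where "p2 = (if m = j then 0 else \<bar>max_partial_sum W (m + 1) j \<omega> \<psi>\<bar> powr \<nu>)"
    have "ereal (\<bar>max_partial_sum W i j \<omega> \<psi>\<bar> powr \<nu>) \<le>
        ereal ((1 - r) powr (1 - \<nu>)) * ereal (\<bar>partial_sum W i m \<omega> \<psi>\<bar> powr \<nu>) +
        ereal (r powr (1 - \<nu>)) * (ereal p1 + ereal p2)"
      using max_partial_sum_powr_le_split[OF m r \<nu>, of W \<omega> \<psi>]
      unfolding p1_def p2_def by simp
    also have "\<dots> \<le> ereal ((1 - r) powr (1 - \<nu>)) * sup_norm_powr \<Psi> \<nu> (partial_sum W i m) \<omega> +
        ereal (r powr (1 - \<nu>)) * (L \<omega> + R \<omega>)"
      using \<open>\<psi> \<in> \<Psi>\<close> unfolding L_def R_def p1_def p2_def sup_norm_powr_def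
      by (intro add_mono ereal_mult_left_mono) (auto intro: SUP_upper2)
    finally show "ereal (\<bar>max_partial_sum W i j \<omega> \<psi>\<bar> powr \<nu>) \<le>
        ereal ((1 - r) powr (1 - \<nu>)) * sup_norm_powr \<Psi> \<nu> (partial_sum W i m) \<omega> +
        ereal (r powr (1 - \<nu>)) * (L \<omega> + R \<omega>)" .
  qed
  then show ?thesis
    by (intro outer_expectation_le_lincomb[OF _ _ x _ _ _ _ sum_bound LR_bound])
      (use nonneg y in auto)
qed

lemma balanced_split_point:
  fixes a b :: "nat \<Rightarrow> real"
  assumes "i \<le> j" and sum_le: "\<And>m. i \<le> m \<Longrightarrow> m < j \<Longrightarrow> a m + b (m + 1) \<le> 2 * c"
  obtains m where "i \<le> m" "m \<le> j" "m \<noteq> i \<Longrightarrow> a (m - 1) \<le> c" "m \<noteq> j \<Longrightarrow> b (m + 1) \<le> c"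
proof -
  define K where "K = {k \<in> {i..j}. k = i \<or> a (k - 1) \<le> c}"
  define m where "m = Max K"
  have "finite K" "i \<in> K" unfolding K_def using assms(1) by auto
  then have "m \<in> K" unfolding m_def by (intro Max_in) auto
  then have m: "i \<le> m" "m \<le> j" "m \<noteq> i \<Longrightarrow> a (m - 1) \<le> c" unfolding K_def by auto
  have "b (m + 1) \<le> c" if "m \<noteq> j"
  proof -
    have "m + 1 \<notin> K" using Max_ge[OF \<open>finite K\<close>, of "m + 1"] unfolding m_def[symmetric] by auto
    then have "c < a m" using m that unfolding K_def by auto
    then show ?thesis using sum_le[of m] m that by linarith
  qed
  with m that show ?thesis by blast
qed

lemma lift_Suc_mono_le_interval:
  fixes f :: "nat \<Rightarrow> 'a :: preorder"
  assumes "\<And>k. a \<le> k \<Longrightarrow> k < b \<Longrightarrow> f k \<le> f (Suc k)" and "a \<le> m" "m \<le> j" "j \<le> b"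
  shows "f m \<le> f j"
  using assms(3,4)
proof (induction j rule: dec_induct)
  case (step k)
  then have "f m \<le> f k" "f k \<le> f (Suc k)" using assms(1,2) by auto
  then show ?case by (rule order.trans)
qed simp

lemma critical_ratio:
  fixes Q \<alpha> \<nu> :: real
  assumes "0 < \<nu>" "0 < \<alpha>" "0 < Q" "Q < 2 powr ((\<alpha> - 1) / \<alpha>)"
  defines "r \<equiv> Q powr (\<alpha> / \<nu>) / 2 powr ((\<alpha> - 1) / \<nu>)"
  shows "0 < r" "r < 1" "r powr \<nu> = 2 * (Q / 2) powr \<alpha>"
proof -
  show "0 < r" unfolding r_def using assms by simp
  have "Q powr (\<alpha> / \<nu>) < (2 powr ((\<alpha> - 1) / \<alpha>)) powr (\<alpha> / \<nu>)"
    using assms by (intro powr_less_mono2) auto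
  also have "\<dots> = 2 powr ((\<alpha> - 1) / \<nu>)" using assms by (simp add: powr_powr)
  finally show "r < 1" unfolding r_def by simp
  have "r powr \<nu> = Q powr \<alpha> / 2 powr (\<alpha> - 1)"
    unfolding r_def using assms by (simp add: powr_divide powr_powr)
  also have "\<dots> = 2 * (Q / 2) powr \<alpha>"
    using assms by (simp add: powr_divide powr_diff)
  finally show "r powr \<nu> = 2 * (Q / 2) powr \<alpha>" .
qed

lemma maximal_constant_recursion:
  fixes r \<nu> G h :: real
  assumes "0 < r" "r < 1" "2 * h \<le> r powr \<nu> * G"
  shows "(1 - r) powr (1 - \<nu>) * G + r powr (1 - \<nu>) * ((1 - r) powr (- \<nu>) * h + (1 - r) powr (- \<nu>) * h)
     \<le> (1 - r) powr (- \<nu>) * G"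
proof -
  have "r powr (1 - \<nu>) * ((1 - r) powr (- \<nu>) * h + (1 - r) powr (- \<nu>) * h)
      = (1 - r) powr (- \<nu>) * r powr (1 - \<nu>) * (2 * h)" by (simp add: algebra_simps)
  also have "\<dots> \<le> (1 - r) powr (- \<nu>) * r powr (1 - \<nu>) * (r powr \<nu> * G)"
    using assms(3) by (intro mult_left_mono) auto
  also have "\<dots> = (1 - r) powr (- \<nu>) * r * G"
    using assms(1) by (simp add: powr_add[symmetric] mult.assoc[symmetric])
  finally have "r powr (1 - \<nu>) * ((1 - r) powr (- \<nu>) * h + (1 - r) powr (- \<nu>) * h)
      \<le> (1 - r) powr (- \<nu>) * r * G" .
  moreover have "(1 - r) powr (1 - \<nu>) = (1 - r) * (1 - r) powr (- \<nu>)"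
    using powr_add[of "1 - r" 1 "- \<nu>"] assms(2) by simp
  then have "(1 - r) powr (1 - \<nu>) * G = (1 - r) powr (- \<nu>) * G - (1 - r) powr (- \<nu>) * r * G"
    by (metis left_diff_distrib mult.assoc mult.commute mult_1)
  ultimately show ?thesis by linarith
qed

lemma outer_expectation_max_partial_sum_le:
  fixes W :: "nat \<Rightarrow> 'a \<Rightarrow> 'p \<Rightarrow> real" and \<Psi> :: "'p set" and g :: "nat \<Rightarrow> nat \<Rightarrow> real"
  assumes \<Psi>: "\<Psi> \<noteq> {}" and \<nu>: "1 \<le> \<nu>" and \<alpha>: "0 \<le> \<alpha>"
    and r: "0 < r" "r < 1" and Q: "0 \<le> Q"
    and ratio: "2 * (Q / 2) powr \<alpha> \<le> r powr \<nu>"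
    and moment: "\<And>i j. 1 \<le> i \<Longrightarrow> i \<le> j \<Longrightarrow> j \<le> n \<Longrightarrow>
      outer_expectation M (sup_norm_powr \<Psi> \<nu> (partial_sum W i j)) \<le> ereal (g i j powr \<alpha>)"
    and g_nonneg: "\<And>i j. 1 \<le> i \<Longrightarrow> i \<le> j \<Longrightarrow> j \<le> n \<Longrightarrow> 0 \<le> g i j"
    and g_mono: "\<And>i m j. 1 \<le> i \<Longrightarrow> i \<le> m \<Longrightarrow> m \<le> j \<Longrightarrow> j \<le> n \<Longrightarrow> g i m \<le> g i j"
    and g_super: "\<And>i m j. 1 \<le> i \<Longrightarrow> i \<le> m \<Longrightarrow> m < j \<Longrightarrow> j \<le> n \<Longrightarrow>
      g i m + g (m + 1) j \<le> Q * g i j"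
    and ij: "1 \<le> i" "i \<le> j" "j \<le> n"
  shows "outer_expectation M (sup_norm_powr \<Psi> \<nu> (max_partial_sum W i j))
    \<le> ereal ((1 - r) powr (- \<nu>) * g i j powr \<alpha>)"
  using ij
proof (induction "j - i" arbitrary: i j rule: less_induct)
  case less
  define A where "A = (1 - r) powr (- \<nu>)"
  define c where "c = Q * g i j / 2"
  obtain m where m: "i \<le> m" "m \<le> j" and left: "m \<noteq> i \<Longrightarrow> g i (m - 1) \<le> c"
    and right: "m \<noteq> j \<Longrightarrow> g (m + 1) j \<le> c"
    using balanced_split_point[of i j "g i" "\<lambda>k. g k j" c] g_super less.prems
    unfolding c_def by auto
  have block_bound: "outer_expectation M (sup_norm_powr \<Psi> \<nu> (max_partial_sum W k l))
      \<le> ereal (A * c powr \<alpha>)"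
    if "i \<le> k" "k \<le> l" "l \<le> j" "l - k < j - i" "g k l \<le> c" for k l
  proof -
    have "outer_expectation M (sup_norm_powr \<Psi> \<nu> (max_partial_sum W k l)) \<le> ereal (A * g k l powr \<alpha>)"
      unfolding A_def using less.hyps[of l k] that less.prems by auto
    also have "A * g k l powr \<alpha> \<le> A * c powr \<alpha>"
      unfolding A_def using g_nonneg[of k l] that less.prems \<alpha>
      by (intro mult_left_mono powr_mono2) auto
    finally show ?thesis by simp
  qed
  have "outer_expectation M (sup_norm_powr \<Psi> \<nu> (max_partial_sum W i j))
      \<le> ereal ((1 - r) powr (1 - \<nu>) * g i j powr \<alpha> + r powr (1 - \<nu>) * (A * c powr \<alpha> + A * c powr \<alpha>))"
  proof (rule outer_expectation_max_partial_sum_split[OF \<Psi> m r \<nu>])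
    have "outer_expectation M (sup_norm_powr \<Psi> \<nu> (partial_sum W i m)) \<le> ereal (g i m powr \<alpha>)"
      using moment m less.prems by auto
    also have "g i m powr \<alpha> \<le> g i j powr \<alpha>"
      using g_nonneg[of i m] g_mono[of i m j] m less.prems \<alpha> by (intro powr_mono2) auto
    finally show "outer_expectation M (sup_norm_powr \<Psi> \<nu> (partial_sum W i m)) \<le> ereal (g i j powr \<alpha>)"
      by simp
  next
    show "outer_expectation M (sup_norm_powr \<Psi> \<nu> (max_partial_sum W i (m - 1))) \<le> ereal (A * c powr \<alpha>)"
      if "m \<noteq> i" using block_bound[of i "m - 1"] left m that less.prems by auto
    show "outer_expectation M (sup_norm_powr \<Psi> \<nu> (max_partial_sum W (m + 1) j)) \<le> ereal (A * c powr \<alpha>)"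
      if "m \<noteq> j" using block_bound[of "m + 1" j] right m that less.prems by auto
  qed (auto simp: A_def)
  also have "\<dots> \<le> ereal (A * g i j powr \<alpha>)"
  proof -
    have "0 \<le> g i j" using g_nonneg less.prems by auto
    then have "2 * c powr \<alpha> = 2 * (Q / 2) powr \<alpha> * g i j powr \<alpha>"
      using powr_mult[of "Q / 2" "g i j" \<alpha>] Q unfolding c_def by (simp add: mult.commute)
    also have "\<dots> \<le> r powr \<nu> * g i j powr \<alpha>"
      using ratio by (intro mult_right_mono) auto
    finally show ?thesis
      unfolding A_def using maximal_constant_recursion[OF r] by simp
  qed
  finally show ?case unfolding A_def .
qed

theorem proposition7p3:
  fixes M :: "'a measure" and W :: "nat \<Rightarrow> 'a \<Rightarrow> 'p \<Rightarrow> real" and \<Psi> :: "'p set"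
    and g :: "nat \<Rightarrow> nat \<Rightarrow> real" and n :: nat and \<alpha> \<nu> Q :: real
  assumes "prob_space M"
    and "\<nu> \<ge> 1" and "\<Psi> \<noteq> {}" and "n \<ge> 1"
    and bdd: "\<forall>k\<in>{1..n}. \<forall>\<omega>\<in>space M. bounded ((\<lambda>\<psi>. W k \<omega> \<psi>) ` \<Psi>)"
    and "\<alpha> > 1"
    and mom: "\<forall>i j. 1 \<le> i \<and> i \<le> j \<and> j \<le> n \<longrightarrow>
       outer_expectation M (\<lambda>\<omega>. SUP \<psi>\<in>\<Psi>. ereal (\<bar>partial_sum W i j \<omega> \<psi>\<bar> powr \<nu>))
         \<le> ereal (g i j powr \<alpha>)"
    and g_nonneg: "\<forall>i\<in>{1..n}. \<forall>j\<in>{1..n}. g i j \<ge> 0"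
    and g_mono: "\<forall>i j. 1 \<le> i \<and> i \<le> j \<and> j \<le> n - 1 \<longrightarrow> g i j \<le> g i (j + 1)"
    and g_super: "\<forall>i j k. 1 \<le> i \<and> i \<le> j \<and> j < k \<and> k \<le> n \<longrightarrow> g i j + g (j + 1) k \<le> Q * g i k"
    and "1 \<le> Q" and "Q < 2 powr ((\<alpha> - 1) / \<alpha>)"
  shows "outer_expectation M (\<lambda>\<omega>. SUP \<psi>\<in>\<Psi>. ereal (\<bar>max_partial_sum W 1 n \<omega> \<psi>\<bar> powr \<nu>))
    \<le> ereal ((1 - Q powr (\<alpha> / \<nu>) / 2 powr ((\<alpha> - 1) / \<nu>)) powr (- \<nu>) * g 1 n powr \<alpha>)"
proof -
  define r where "r = Q powr (\<alpha> / \<nu>) / 2 powr ((\<alpha> - 1) / \<nu>)"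
  have r: "0 < r" "r < 1" "r powr \<nu> = 2 * (Q / 2) powr \<alpha>"
    using critical_ratio[of \<nu> \<alpha> Q] assms unfolding r_def by auto
  have g_mono': "g i m \<le> g i j" if "1 \<le> i" "i \<le> m" "m \<le> j" "j \<le> n" for i m j
    using lift_Suc_mono_le_interval[of i n "g i" m j] g_mono that by auto
  have "outer_expectation M (sup_norm_powr \<Psi> \<nu> (max_partial_sum W 1 n))
      \<le> ereal ((1 - r) powr (- \<nu>) * g 1 n powr \<alpha>)"
  proof (rule outer_expectation_max_partial_sum_le[where Q = Q])
    show "\<Psi> \<noteq> {}" using assms by simp
    show "2 * (Q / 2) powr \<alpha> \<le> r powr \<nu>" using r by simp
    show "outer_expectation M (sup_norm_powr \<Psi> \<nu> (partial_sum W i j)) \<le> ereal (g i j powr \<alpha>)"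
      if "1 \<le> i" "i \<le> j" "j \<le> n" for i j
      using mom that unfolding sup_norm_powr_def by blast
    show "0 \<le> g i j" if "1 \<le> i" "i \<le> j" "j \<le> n" for i j
      using g_nonneg that by auto
    show "g i m + g (m + 1) j \<le> Q * g i j" if "1 \<le> i" "i \<le> m" "m < j" "j \<le> n" for i m j
      using g_super that by blast
  qed (use assms r g_mono' in auto)
  then show ?thesis unfolding sup_norm_powr_def r_def .
qed

end
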